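(* Let $r\ge2$ be an integer. Then $\mathcal C_r(0)=1$, $\mathcal C_r'(0)=0$, and for all $x\in D\setminus\{0\}$, $$\mathcal C_r''(x)=(1-x^{1-r})\frac{\mathcal C_r'(x)^2}{\mathcal C_r(x)}+(r-1)\frac{\mathcal C_r'(x)}{x}-\pi^2x^{r-1}\mathcal C_r(x).$$
   Context: For an integer $r\ge2$ let $P_r(y)=(1-y)\exp\left(y+\frac{y^2}{2}+\cdots+\frac{y^r}{r}\right)$. The multiple cosine function of Kurokawa–Koyama of order $r\ge2$ is $\mathcal C_r(x)=\prod_{n\ge1,\ n\text{ odd}}\left\{P_r\left(\frac{x}{n/2}\right)P_r\left(-\frac{x}{n/2}\right)^{(-1)^{r-1}}\right\}^{(n/2)^{r-1}}$, interpreted as $\mathcal C_r(x)=\exp\Big(\sum_{n\ge1,\,n\text{ odd}}(n/2)^{r-1}\big[\operatorname{Log}P_r(2x/n)+(-1)^{r-1}\operatorname{Log}P_r(-2x/n)\big]\Big)$, where $\operatorname{Log}P_r(y):=\operatorname{Log}(1-y)+y+\frac{y^2}{2}+\cdots+\frac{y^r}{r}$ with $\operatorname{Log}$ the principal branch, for $x\in D=\mathbb C\setminus\big((-\infty,-\tfrac12]\cup[\tfrac12,\infty)\big)$ (a holomorphic function on $D$). *)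

theory Defs
  imports "HOL-Complex_Analysis.Complex_Analysis"
begin

definition LogP :: "nat \<Rightarrow> complex \<Rightarrow> complex" where
  "LogP r y = Ln (1 - y) + (\<Sum>k=1..r. y ^ k / of_nat k)"

text \<open>Multiple cosine of order r; the product over odd n is indexed by n = 2m+1.\<close>
definition mcos :: "nat \<Rightarrow> complex \<Rightarrow> complex" where
  "mcos r x = exp (\<Sum>m. (of_nat (2*m+1) / 2) ^ (r - 1) *
       (LogP r (2 * x / of_nat (2*m+1)) + (-1) ^ (r - 1) * LogP r (- 2 * x / of_nat (2*m+1))))"

definition mcosD :: "complex set" where
  "mcosD = - {z. Im z = 0 \<and> \<bar>Re z\<bar> \<ge> 1/2}"

end

theory Submission
  imports Defs
begin

text \<open>
  Write mcos r = exp L, where L is the series of logarithms of the factors. Since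
  (Log P_r)'(y) = - y^r / (1 - y), the terms of L are O(|x|^(r+1) / n^2), so L converges
  locally uniformly on D and may be differentiated termwise. The derived series is -x^(r-1)
  times the partial fraction expansion pi tan (pi x) = \<Sum>m. 8x / ((2m+1)^2 - 4x^2), which
  follows from the reflection formula for the digamma function. Hence mcos' = G mcos with
  G x = - pi x^(r-1) tan (pi x), and mcos'' = (G^2 + G') mcos. The part - pi^2 x^(r-1) tan^2 (pi x)
  of G' that comes from tan' = 1 + tan^2 equals - x^(1-r) G^2, which gives the equation.
\<close>

section \<open>Partial fractions and derivative of the tangent\<close>

lemma Digamma_reflection:
  fixes z :: complex
  assumes "z \<notin> \<int>"
  shows "Digamma (1 - z) - Digamma z = of_real pi * cot (of_real pi * z)"
proof -
  have "1 - z \<notin> \<int>"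
    using assms Ints_diff[OF Ints_1, of "1 - z"] by auto
  then have nonpos: "z \<notin> \<int>\<^sub>\<le>\<^sub>0" "1 - z \<notin> \<int>\<^sub>\<le>\<^sub>0"
    using assms by (auto intro: not_in_Ints_imp_not_in_nonpos_Ints)
  have "((\<lambda>z. rGamma (1 - z)) has_field_derivative (- rGamma (1 - z) * Digamma (1 - z)) * (- 1)) (at z)"
    by (rule DERIV_chain2[where g = "\<lambda>z. 1 - z", OF has_field_derivative_rGamma_no_nonpos_int[OF nonpos(2)]])
       (auto intro!: derivative_eq_intros)
  note D1 = DERIV_mult[OF has_field_derivative_rGamma_no_nonpos_int[OF nonpos(1)] this]
  have D2: "((\<lambda>z. rGamma z * rGamma (1 - z)) has_field_derivative
                   cos (of_real pi * z) * (of_real pi * 1) / of_real pi) (at z)"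
    unfolding rGamma_reflection_complex
    by (rule DERIV_cdivide, rule DERIV_chain2[where f = sin, OF DERIV_sin])
       (auto intro!: derivative_eq_intros)
  have "rGamma z * rGamma (1 - z) * (Digamma (1 - z) - Digamma z) = cos (of_real pi * z)"
    using DERIV_unique[OF D1 D2] by (simp add: algebra_simps)
  then have "sin (of_real pi * z) / of_real pi * (Digamma (1 - z) - Digamma z)
               = cos (of_real pi * z)"
    by (simp add: rGamma_reflection_complex)
  moreover have "sin (of_real pi * z) \<noteq> 0"
  proof
    assume "sin (of_real pi * z) = 0"
    then obtain j :: int where "of_real pi * z = of_real (of_int j * pi)"
      by (auto simp: sin_eq_0)
    then have "z = of_int j" by (simp add: field_simps)
    with assms show False by auto
  qed
  ultimately show ?thesis by (simp add: cot_def field_simps)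
qed

lemma Digamma_diff_sums:
  fixes a b :: "'a :: {real_normed_field, banach}"
  assumes "a \<noteq> 0" "b \<noteq> 0"
  shows "(\<lambda>k. inverse (b + of_nat k) - inverse (a + of_nat k)) sums (Digamma a - Digamma b)"
  using sums_diff[OF summable_sums[OF summable_Digamma[OF assms(1)]]
                     summable_sums[OF summable_Digamma[OF assms(2)]]]
  by (simp add: Digamma_def)

lemma pi_tan_pi_sums:
  fixes x :: complex
  assumes x: "x + 1/2 \<notin> \<int>"
  shows "(\<lambda>m. 8 * x / ((of_nat (2*m+1))\<^sup>2 - 4 * x\<^sup>2)) sums (of_real pi * tan (of_real pi * x))"
proof -
  define a where "a = 1/2 + x"
  define b where "b = 1/2 - x"
  have ak: "a + of_nat k \<noteq> 0" for k
  proof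
    assume "a + of_nat k = 0"
    then have "x + 1/2 = - of_nat k" by (simp add: a_def add_eq_0_iff2 add.commute)
    with x show False by (metis Ints_minus Ints_of_nat)
  qed
  have bk: "b + of_nat k \<noteq> 0" for k
  proof
    assume "b + of_nat k = 0"
    then have "x + 1/2 = of_nat (Suc k)" by (simp add: b_def eq_neg_iff_add_eq_0 field_simps)
    with x show False by (metis Ints_of_nat)
  qed
  have b: "b \<notin> \<int>"
  proof
    assume "b \<in> \<int>"
    then have "1 - b \<in> \<int>" by (intro Ints_diff) auto
    with x show False by (simp add: b_def algebra_simps)
  qed
  have "(\<lambda>k. inverse (b + of_nat k) - inverse (a + of_nat k)) sums (Digamma a - Digamma b)"
    using Digamma_diff_sums ak[of 0] bk[of 0] by simp
  moreover have "inverse (b + of_nat k) - inverse (a + of_nat k)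
                   = 8 * x / ((of_nat (2*k+1))\<^sup>2 - 4 * x\<^sup>2)" for k
  proof -
    define N :: complex where "N = of_nat (2*k+1)"
    have e: "b + of_nat k = (N - 2*x) / 2" "a + of_nat k = (N + 2*x) / 2"
      by (simp_all add: a_def b_def N_def field_simps)
    with ak[of k] bk[of k] have "N - 2*x \<noteq> 0" "N + 2*x \<noteq> 0" by auto
    moreover have "N\<^sup>2 - 4 * x\<^sup>2 = (N - 2*x) * (N + 2*x)"
      by (simp add: power2_eq_square algebra_simps)
    ultimately show ?thesis
      unfolding e N_def[symmetric] by (simp add: field_simps)
  qed
  moreover have "Digamma a - Digamma b = of_real pi * tan (of_real pi * x)"
  proof -
    have "of_real pi * b = of_real pi / 2 - of_real pi * x" by (simp add: b_def algebra_simps)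
    then have "cot (of_real pi * b) = tan (of_real pi * x)"
      by (simp add: cot_def tan_def sin_cos_eq[of "of_real pi * x"] cos_sin_eq[of "of_real pi * x"])
    with Digamma_reflection[OF b] show ?thesis by (simp add: a_def b_def)
  qed
  ultimately show ?thesis by simp
qed

lemma cos_pi_neq_0:
  fixes x :: complex
  assumes "x + 1/2 \<notin> \<int>"
  shows "cos (of_real pi * x) \<noteq> 0"
proof
  assume "cos (of_real pi * x) = 0"
  then obtain j :: int where "of_real pi * x = of_real (of_int j * pi) + of_real pi / 2"
    by (auto simp: cos_eq_0)
  then have "of_real pi * (x + 1/2) = of_real pi * of_int (j + 1)"
    by (simp add: algebra_simps)
  then have "x + 1/2 = of_int (j + 1)" by simp
  with assms show False by (metis Ints_of_int)
qed

lemma has_field_derivative_tan_sec: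
  fixes z :: "'a :: {real_normed_field, banach}"
  assumes "cos z \<noteq> 0"
  shows "(tan has_field_derivative 1 + (tan z)\<^sup>2) (at z)"
  using DERIV_tan[OF assms] tan_sec[OF assms] by (simp add: power_inverse)

lemma has_field_derivative_power_tan:
  fixes p x :: "'a :: {real_normed_field, banach}"
  assumes "cos (p * x) \<noteq> 0"
  shows "((\<lambda>y. p * y ^ s * tan (p * y)) has_field_derivative
           p * (of_nat s * x ^ (s - 1)) * tan (p * x) + (1 + (tan (p * x))\<^sup>2) * p * (p * x ^ s)) (at x)"
proof -
  have "((\<lambda>y. tan (p * y)) has_field_derivative (1 + (tan (p * x))\<^sup>2) * p) (at x)"
    using assms by (rule has_field_derivative_tan_sec[THEN DERIV_chain2]) (auto intro!: derivative_eq_intros)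
  moreover have "((\<lambda>y. p * y ^ s) has_field_derivative p * (of_nat s * x ^ (s - 1))) (at x)"
    by (auto intro!: derivative_eq_intros)
  ultimately show ?thesis
    by (rule DERIV_mult[rotated])
qed

section \<open>The truncated logarithm \<open>Log P\<^sub>r\<close>\<close>

lemma has_field_derivative_LogP:
  assumes "1 - w \<notin> \<real>\<^sub>\<le>\<^sub>0"
  shows "(LogP r has_field_derivative - (w ^ r / (1 - w))) (at w)"
proof -
  have "(LogP r has_field_derivative - inverse (1 - w) + (\<Sum>k=1..r. w ^ (k - 1))) (at w)"
    unfolding LogP_def[abs_def] using assms
    by (auto intro!: derivative_eq_intros has_field_derivative_Ln[THEN DERIV_chain2])
  moreover have "(\<Sum>k=1..r. w ^ (k - 1)) = (\<Sum>k<r. w ^ k)"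
    by (induction r) (auto simp: atLeastAtMostSuc_conv)
  moreover have "1 - w \<noteq> 0" using assms by auto
  ultimately show ?thesis
    using one_diff_power_eq[of w r] by (simp add: field_simps)
qed

lemma LogP_0 [simp]: "LogP r 0 = 0"
  by (simp add: LogP_def power_0_left)

lemma norm_LogP_le:
  assumes "norm w \<le> 1/2"
  shows "norm (LogP r w) \<le> 2 * norm w ^ (r + 1)"
proof -
  let ?S = "cball (0::complex) (norm w)"
  have "norm (LogP r w - LogP r 0) \<le> 2 * norm w ^ r * norm (w - 0)"
  proof (rule field_differentiable_bound[where S = ?S])
    fix z :: complex assume z: "z \<in> ?S"
    have "1 - norm z \<le> norm (1 - z)"
      using norm_triangle_ineq2[of 1 z] by simp
    with z assms have half: "1/2 \<le> norm (1 - z)" by simp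
    have "Re (1 - z) > 0"
      using z assms abs_Re_le_cmod[of z] by simp
    then have "1 - z \<notin> \<real>\<^sub>\<le>\<^sub>0"
      by (simp add: complex_nonpos_Reals_iff)
    then show "(LogP r has_field_derivative - (z ^ r / (1 - z))) (at z within ?S)"
      by (rule has_field_derivative_at_within[OF has_field_derivative_LogP])
    have "norm (- (z ^ r / (1 - z))) = norm z ^ r / norm (1 - z)"
      by (simp add: norm_divide norm_power)
    also have "\<dots> \<le> norm w ^ r / (1/2)"
      using half z by (intro frac_le power_mono) auto
    finally show "norm (- (z ^ r / (1 - z))) \<le> 2 * norm w ^ r" by simp
  qed auto
  then show ?thesis by (simp add: mult_ac)
qed

text \<open>The logarithm of P_r(w) P_r(-w)^((-1)^(r-1)), the factor of index n of mcos at w = 2x/n.\<close>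
definition LogP_sym :: "nat \<Rightarrow> complex \<Rightarrow> complex" where
  "LogP_sym r w = LogP r w + (-1) ^ (r - 1) * LogP r (- w)"

lemma has_field_derivative_LogP_sym:
  assumes "r \<ge> 1" "1 - w \<notin> \<real>\<^sub>\<le>\<^sub>0" "1 + w \<notin> \<real>\<^sub>\<le>\<^sub>0"
  shows "(LogP_sym r has_field_derivative - (2 * w ^ r / (1 - w\<^sup>2))) (at w)"
proof -
  have "(LogP_sym r has_field_derivative
          - (w ^ r / (1 - w)) + (-1) ^ (r - 1) * (- ((- w) ^ r / (1 - - w)) * (- 1))) (at w)"
    unfolding LogP_sym_def[abs_def] using assms(2,3)
    by (auto intro!: derivative_eq_intros has_field_derivative_LogP[THEN DERIV_chain2])
  moreover have "(-1::complex) ^ (r - 1) * (-1) ^ r = -1"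
  proof -
    obtain s where "r = Suc s" using assms(1) by (cases r) auto
    then show ?thesis by (simp flip: power_add mult_2)
  qed
  moreover have "1 - w \<noteq> 0" "1 + w \<noteq> 0" using assms(2,3) by auto
  ultimately show ?thesis
    by (simp add: power_minus' field_simps power2_eq_square)
qed

lemma norm_LogP_sym_le:
  assumes "norm w \<le> 1/2"
  shows "norm (LogP_sym r w) \<le> 4 * norm w ^ (r + 1)"
proof -
  have "norm ((-1) ^ (r - 1) * LogP r (- w)) = norm (LogP r (- w))"
    by (simp add: norm_mult norm_power)
  then have "norm (LogP_sym r w) \<le> norm (LogP r w) + norm (LogP r (- w))"
    unfolding LogP_sym_def by (metis norm_triangle_ineq)
  also have "\<dots> \<le> 2 * norm w ^ (r + 1) + 2 * norm (- w) ^ (r + 1)"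
    using assms by (intro add_mono norm_LogP_le) auto
  finally show ?thesis by simp
qed

lemma of_real_in_mcosD_iff [simp]: "complex_of_real t \<in> mcosD \<longleftrightarrow> \<bar>t\<bar> < 1/2"
  by (auto simp: mcosD_def)

lemma uminus_in_mcosD_iff [simp]: "- x \<in> mcosD \<longleftrightarrow> x \<in> mcosD"
  by (auto simp: mcosD_def)

lemma zero_in_mcosD [simp]: "0 \<in> mcosD"
  by (simp add: mcosD_def)

lemma open_mcosD: "open mcosD"
proof -
  have "closed {z::complex. Im z = 0 \<and> \<bar>Re z\<bar> \<ge> 1/2}"
    by (intro closed_Collect_conj closed_Collect_eq closed_Collect_le continuous_intros)
  then show ?thesis unfolding mcosD_def by (simp add: open_Compl)
qed

lemma mcosD_plus_half_notin_Ints: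
  assumes "x \<in> mcosD"
  shows "x + 1/2 \<notin> \<int>"
proof
  assume "x + 1/2 \<in> \<int>"
  then obtain j where "x + 1/2 = of_int j" by (auto elim: Ints_cases)
  then have x: "x = of_real (of_int j - 1/2)" by (simp add: algebra_simps)
  from assms[unfolded x] have "\<bar>real_of_int j - 1/2\<bar> < 1/2"
    by (simp only: of_real_in_mcosD_iff)
  then have "0 < real_of_int j" "real_of_int j < 1"
    unfolding abs_less_iff by linarith+
  then show False by simp
qed

lemma one_minus_scaled_notin_nonpos_Reals:
  assumes "x \<in> mcosD" "c \<ge> 1"
  shows "1 - 2 * x / of_real c \<notin> \<real>\<^sub>\<le>\<^sub>0"
proof
  assume "1 - 2 * x / of_real c \<in> \<real>\<^sub>\<le>\<^sub>0"
  then obtain t where t: "1 - 2 * x / of_real c = of_real t" "t \<le> 0"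
    by (auto simp: nonpos_Reals_def)
  with assms(2) have x: "x = of_real (c * (1 - t) / 2)"
    by (auto simp: field_simps)
  from assms(1)[unfolded x] have "\<bar>c * (1 - t) / 2\<bar> < 1/2"
    by (simp only: of_real_in_mcosD_iff)
  with assms(2) t(2) have "c * (1 - t) < 1"
    by simp
  moreover have "1 * 1 \<le> c * (1 - t)"
    using assms(2) t(2) by (intro mult_mono) auto
  ultimately show False by simp
qed

section \<open>The logarithmic derivative of the multiple cosine\<close>

definition mcos_term :: "nat \<Rightarrow> nat \<Rightarrow> complex \<Rightarrow> complex" where
  "mcos_term r m x = (of_nat (2*m+1) / 2) ^ (r - 1) * LogP_sym r (2 * x / of_nat (2*m+1))"

lemma mcos_eq_exp_suminf: "mcos r x = exp (\<Sum>m. mcos_term r m x)"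
  by (simp add: mcos_def mcos_term_def LogP_sym_def)

lemma LogP_sym_chain_rule_eq:
  fixes n x :: complex
  assumes "n \<noteq> 0" "n - 2 * x \<noteq> 0" "n + 2 * x \<noteq> 0"
  shows "(n/2) ^ s * (- (2 * (2 * x / n) ^ Suc s / (1 - (2 * x / n)\<^sup>2)) * (2 / n))
           = - (x ^ s * (8 * x / (n\<^sup>2 - 4 * x\<^sup>2)))"
proof -
  let ?w = "2 * x / n"
  have P: "(n/2) ^ s * ?w ^ Suc s = 2 * x / n * x ^ s"
    using assms(1) by (simp add: power_divide power_mult_distrib field_simps)
  have B: "1 - ?w\<^sup>2 = (n - 2 * x) * (n + 2 * x) / n\<^sup>2"
    using assms(1) by (simp add: field_simps power2_eq_square)
  have F: "n\<^sup>2 - 4 * x\<^sup>2 = (n - 2 * x) * (n + 2 * x)"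
    by (simp add: algebra_simps power2_eq_square)
  have "(n/2) ^ s * (- (2 * ?w ^ Suc s / (1 - ?w\<^sup>2)) * (2 / n))
          = - (4 * ((n/2) ^ s * ?w ^ Suc s) / (n * (1 - ?w\<^sup>2)))"
    by (simp add: algebra_simps)
  also have "\<dots> = - (x ^ s * (8 * x / (n\<^sup>2 - 4 * x\<^sup>2)))"
  proof -
    have "- (4 * (2 * x / n * X) / (n * (N / n\<^sup>2))) = - (X * (8 * x / N))" if "N \<noteq> 0" for N X
      using that assms(1) by (simp add: field_simps power2_eq_square)
    then show ?thesis
      unfolding P B F using assms(2,3) by simp
  qed
  finally show ?thesis .
qed

lemma has_field_derivative_mcos_term:
  assumes "r \<ge> 1" "x \<in> mcosD"
  shows "(mcos_term r m has_field_derivative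
           - (x ^ (r - 1) * (8 * x / ((of_nat (2*m+1))\<^sup>2 - 4 * x\<^sup>2)))) (at x)"
proof -
  define n :: complex where "n = of_nat (2*m+1)"
  let ?w = "2 * x / n"
  have "n \<noteq> 0" unfolding n_def of_nat_eq_0_iff by simp
  have "1 - 2 * x / of_real (real (2*m+1)) \<notin> \<real>\<^sub>\<le>\<^sub>0"
    "1 - 2 * (- x) / of_real (real (2*m+1)) \<notin> \<real>\<^sub>\<le>\<^sub>0"
    using assms(2) by (intro one_minus_scaled_notin_nonpos_Reals; simp)+
  then have w: "1 - ?w \<notin> \<real>\<^sub>\<le>\<^sub>0" "1 + ?w \<notin> \<real>\<^sub>\<le>\<^sub>0"
    by (simp_all add: n_def)
  have D: "(mcos_term r m has_field_derivative
          (n/2) ^ (r - 1) * (- (2 * ?w ^ r / (1 - ?w\<^sup>2)) * (2 / n))) (at x)"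
    unfolding mcos_term_def[abs_def] n_def[symmetric]
    by (rule DERIV_cmult, rule DERIV_chain2[where g = "\<lambda>x. 2 * x / n", OF has_field_derivative_LogP_sym[OF assms(1) w]])
       (auto intro!: derivative_eq_intros simp: \<open>n \<noteq> 0\<close>)
  obtain s where s: "r = Suc s" using assms(1) by (cases r) auto
  from w have "1 - ?w \<noteq> 0" "1 + ?w \<noteq> 0" by auto
  with \<open>n \<noteq> 0\<close> have nz: "n - 2 * x \<noteq> 0" "n + 2 * x \<noteq> 0"
    by (auto simp: field_simps)
  note eq = LogP_sym_chain_rule_eq[OF \<open>n \<noteq> 0\<close> nz, of s]
  show ?thesis
    using D unfolding s diff_Suc_1 eq n_def[symmetric] .
qed

lemma norm_mcos_term_le:
  assumes "r \<ge> 1" "4 * norm y \<le> real (2*m+1)"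
  shows "norm (mcos_term r m y) \<le> 16 * norm y ^ (r + 1) / real (2*m+1) ^ 2"
proof -
  define n where "n = real (2*m+1)"
  have n: "n \<ge> 1" by (simp add: n_def)
  have w: "norm (2 * y / of_nat (2*m+1)) = 2 * norm y / n"
    unfolding norm_divide norm_mult norm_of_nat n_def by simp
  obtain s where s: "r = Suc s" using assms(1) by (cases r) auto
  have "norm (mcos_term r m y) = (n/2) ^ s * norm (LogP_sym r (2 * y / of_nat (2*m+1)))"
    unfolding mcos_term_def norm_mult norm_power norm_divide norm_of_nat n_def s by simp
  also have "\<dots> \<le> (n/2) ^ s * (4 * (2 * norm y / n) ^ (r + 1))"
  proof (rule mult_left_mono)
    have "2 * norm y / n \<le> 1/2"
      using assms(2) n by (simp add: n_def field_simps)
    from norm_LogP_sym_le[OF this[folded w]]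
    show "norm (LogP_sym r (2 * y / of_nat (2*m+1))) \<le> 4 * (2 * norm y / n) ^ (r + 1)"
      by (simp only: w)
  qed (use n in simp)
  also have "\<dots> = 16 * norm y ^ (r + 1) / n ^ 2"
    using n by (simp add: s power_mult_distrib power_divide field_simps power2_eq_square)
  finally show ?thesis by (simp add: n_def)
qed

lemma summable_div_odd_square: "summable (\<lambda>m. C / real (2*m+1) ^ 2)"
proof -
  have "summable (\<lambda>m. inverse (real (2*m+1) ^ 2))"
  proof (rule summable_comparison_test'[where N=1])
    show "summable (\<lambda>n. inverse (real n ^ 2))" by (rule inverse_power_summable) simp
  qed (auto intro!: le_imp_inverse_le power_mono)
  then show ?thesis
    using summable_mult[of _ C] by (simp add: divide_inverse)
qed

lemma mcos_term_locally_dominated: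
  assumes "r \<ge> 1"
  shows "\<exists>d h. 0 < d \<and> summable h \<and>
           (\<forall>\<^sub>F m in sequentially. \<forall>y\<in>ball z d. norm (mcos_term r m y) \<le> h m)"
proof (intro exI conjI)
  define R where "R = norm z + 1"
  show "summable (\<lambda>m. 16 * R ^ (r + 1) / real (2*m+1) ^ 2)"
    by (rule summable_div_odd_square)
  show "\<forall>\<^sub>F m in sequentially. \<forall>y\<in>ball z 1.
          norm (mcos_term r m y) \<le> 16 * R ^ (r + 1) / real (2*m+1) ^ 2"
    using eventually_ge_at_top[of "nat \<lceil>4 * R\<rceil>"]
  proof eventually_elim
    case (elim m)
    show ?case
    proof
      fix y assume "y \<in> ball z 1"
      then have y: "norm y \<le> R"
        using norm_triangle_ineq2[of y z] by (auto simp: R_def dist_norm norm_minus_commute)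
      with elim have "4 * norm y \<le> real (2*m+1)" by linarith
      then have "norm (mcos_term r m y) \<le> 16 * norm y ^ (r + 1) / real (2*m+1) ^ 2"
        by (rule norm_mcos_term_le[OF assms])
      also have "\<dots> \<le> 16 * R ^ (r + 1) / real (2*m+1) ^ 2"
        using y by (intro divide_right_mono mult_left_mono power_mono) auto
      finally show "norm (mcos_term r m y) \<le> 16 * R ^ (r + 1) / real (2*m+1) ^ 2" .
    qed
  qed
qed simp

lemma has_field_derivative_mcos_log:
  assumes "r \<ge> 1" "x \<in> mcosD"
  shows "((\<lambda>x. \<Sum>m. mcos_term r m x) has_field_derivative
           - (x ^ (r - 1) * (of_real pi * tan (of_real pi * x)))) (at x)"
proof -
  have dominated: "\<exists>d h. 0 < d \<and> summable h \<and>
      (\<forall>\<^sub>F m in sequentially. \<forall>y\<in>ball z d \<inter> mcosD. norm (mcos_term r m y) \<le> h m)" for z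
  proof -
    obtain d h where "0 < d" "summable h"
      and le: "\<forall>\<^sub>F m in sequentially. \<forall>y\<in>ball z d. norm (mcos_term r m y) \<le> h m"
      using mcos_term_locally_dominated[OF assms(1)] by blast
    moreover from le have "\<forall>\<^sub>F m in sequentially. \<forall>y\<in>ball z d \<inter> mcosD. norm (mcos_term r m y) \<le> h m"
      by (rule eventually_mono) auto
    ultimately show ?thesis by blast
  qed
  obtain g g' where g: "\<forall>y\<in>mcosD. (\<lambda>m. mcos_term r m y) sums g y \<and>
      (\<lambda>m. - (y ^ (r - 1) * (8 * y / ((of_nat (2*m+1))\<^sup>2 - 4 * y\<^sup>2)))) sums g' y \<and>
      (g has_field_derivative g' y) (at y)"
    using series_and_derivative_comparison_local[OF open_mcosD
            has_field_derivative_mcos_term[OF assms(1)] dominated] by blast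
  have "(\<lambda>m. - (x ^ (r - 1) * (8 * x / ((of_nat (2*m+1))\<^sup>2 - 4 * x\<^sup>2))))
          sums - (x ^ (r - 1) * (of_real pi * tan (of_real pi * x)))"
    by (intro sums_minus sums_mult pi_tan_pi_sums mcosD_plus_half_notin_Ints assms(2))
  with g assms(2) have "(g has_field_derivative - (x ^ (r - 1) * (of_real pi * tan (of_real pi * x)))) (at x)"
    using sums_unique2 by fastforce
  then show ?thesis
    by (rule has_field_derivative_transform_within_open[OF _ open_mcosD assms(2)])
       (use g sums_unique in fastforce)
qed

lemma has_field_derivative_mcos:
  assumes "r \<ge> 1" "x \<in> mcosD"
  shows "(mcos r has_field_derivative
           - (of_real pi * x ^ (r - 1) * tan (of_real pi * x)) * mcos r x) (at x)"
proof -
  have "mcos r = (\<lambda>x. exp (\<Sum>m. mcos_term r m x))"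
    by (rule ext) (rule mcos_eq_exp_suminf)
  then show ?thesis
    using DERIV_chain2[OF DERIV_exp has_field_derivative_mcos_log[OF assms]]
    by (simp add: mult_ac)
qed

lemma deriv_mcos:
  assumes "r \<ge> 1" "x \<in> mcosD"
  shows "deriv (mcos r) x = - (of_real pi * x ^ (r - 1) * tan (of_real pi * x)) * mcos r x"
  by (rule DERIV_imp_deriv[OF has_field_derivative_mcos[OF assms]])

lemma mcos_ode:
  assumes "r \<ge> 1" "x \<in> mcosD" "x \<noteq> 0"
  shows "deriv (deriv (mcos r)) x =
           (1 - x powi (1 - int r)) * (deriv (mcos r) x)\<^sup>2 / mcos r x
           + of_nat (r - 1) * deriv (mcos r) x / x
           - of_real (pi\<^sup>2) * x ^ (r - 1) * mcos r x"
proof -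
  obtain s where r: "r = Suc s" using assms(1) by (cases r) auto
  define p where "p = complex_of_real pi"
  define G where "G y = - (p * y ^ s * tan (p * y))" for y
  have "cos (p * x) \<noteq> 0"
    unfolding p_def by (intro cos_pi_neq_0 mcosD_plus_half_notin_Ints assms(2))
  from DERIV_minus[OF has_field_derivative_power_tan[OF this]]
  have G': "(G has_field_derivative - (p * (of_nat s * x ^ (s - 1)) * tan (p * x)
                                       + (1 + (tan (p * x))\<^sup>2) * p * (p * x ^ s))) (at x)"
    unfolding G_def .
  have mcos': "(mcos r has_field_derivative G x * mcos r x) (at x)"
    using has_field_derivative_mcos[OF assms(1,2)] by (simp add: G_def r p_def)
  have deriv_eq: "deriv (mcos r) y = G y * mcos r y" if "y \<in> mcosD" for y
    using deriv_mcos[OF assms(1) that] by (simp add: G_def r p_def)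
  from DERIV_mult[OF G' mcos']
  have "(deriv (mcos r) has_field_derivative
          - (p * (of_nat s * x ^ (s - 1)) * tan (p * x) + (1 + (tan (p * x))\<^sup>2) * p * (p * x ^ s))
            * mcos r x + G x * mcos r x * G x) (at x)"
    by (rule has_field_derivative_transform_within_open[OF _ open_mcosD assms(2)])
       (simp add: deriv_eq)
  then have dd: "deriv (deriv (mcos r)) x =
          - (p * (of_nat s * x ^ (s - 1)) * tan (p * x) + (1 + (tan (p * x))\<^sup>2) * p * (p * x ^ s))
            * mcos r x + G x * mcos r x * G x"
    by (rule DERIV_imp_deriv)
  have pow: "of_nat s * x ^ (s - 1) = of_nat s * x ^ s / x"
    using assms(3) by (cases s) auto
  have powi: "x powi (1 - int r) = inverse (x ^ s)"
    by (simp add: r power_int_minus)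
  have "mcos r x \<noteq> 0"
    by (simp add: mcos_eq_exp_suminf)
  with assms(3) show ?thesis
    unfolding dd deriv_eq[OF assms(2)] powi unfolding pow G_def p_def r
    by (simp add: field_simps power2_eq_square)
qed

theorem proposition3p5:
  fixes r :: nat
  assumes "r \<ge> 2"
  shows "mcos r 0 = 1 \<and> deriv (mcos r) 0 = 0 \<and>
    (\<forall>x \<in> mcosD - {0}.
       deriv (deriv (mcos r)) x =
         (1 - x powi (1 - int r)) * (deriv (mcos r) x)\<^sup>2 / mcos r x
         + of_nat (r - 1) * deriv (mcos r) x / x
         - of_real (pi\<^sup>2) * x ^ (r - 1) * mcos r x)"
proof -
  have r: "r \<ge> 1" using assms by simp
  have "mcos r 0 = 1"
    by (simp add: mcos_eq_exp_suminf mcos_term_def LogP_sym_def)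
  moreover have "deriv (mcos r) 0 = 0"
    using deriv_mcos[OF r zero_in_mcosD] assms by simp
  moreover have "\<forall>x \<in> mcosD - {0}.
       deriv (deriv (mcos r)) x =
         (1 - x powi (1 - int r)) * (deriv (mcos r) x)\<^sup>2 / mcos r x
         + of_nat (r - 1) * deriv (mcos r) x / x
         - of_real (pi\<^sup>2) * x ^ (r - 1) * mcos r x"
    using mcos_ode[OF r] by blast
  ultimately show ?thesis by blast
qed

end
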